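(* Let $\mathbb{F}$ be a field with $\mathrm{char}(\mathbb{F})\neq 2$ and let $L$ be a finite-dimensional Lie algebra over $\mathbb{F}$ of breadth $1$. Then $L$ is nilpotent if and only if $[L,L]\subseteq Z(L)$.
   Context: For $x\in L$, $b(x)=\mathrm{rank}(\mathrm{ad}_x)$ and the breadth of $L$ is $b(L)=\max\{b(x)\mid x\in L\}$. $Z(L)$ denotes the center of $L$. *)

theory Defs
  imports Main "HOL.Vector_Spaces"
begin

definition lie_algebra :: "('a::field \<Rightarrow> 'b::ab_group_add \<Rightarrow> 'b) \<Rightarrow> ('b \<Rightarrow> 'b \<Rightarrow> 'b) \<Rightarrow> bool" where
  "lie_algebra scale br \<longleftrightarrow>
     Vector_Spaces.vector_space scale \<and>
     (\<forall>x. Vector_Spaces.linear scale scale (br x)) \<and>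
     (\<forall>y. Vector_Spaces.linear scale scale (\<lambda>x. br x y)) \<and>
     (\<forall>x. br x x = 0) \<and>
     (\<forall>x y z. br x (br y z) + br y (br z x) + br z (br x y) = 0)"

definition fin_dim_space :: "('a::field \<Rightarrow> 'b::ab_group_add \<Rightarrow> 'b) \<Rightarrow> bool" where
  "fin_dim_space scale \<longleftrightarrow> (\<exists>B. finite B \<and> module.span scale B = UNIV)"

definition breadth_elt :: "('a::field \<Rightarrow> 'b::ab_group_add \<Rightarrow> 'b) \<Rightarrow> ('b \<Rightarrow> 'b \<Rightarrow> 'b) \<Rightarrow> 'b \<Rightarrow> nat" where
  "breadth_elt scale br x = Vector_Spaces.vector_space.dim scale (range (br x))"

definition breadth :: "('a::field \<Rightarrow> 'b::ab_group_add \<Rightarrow> 'b) \<Rightarrow> ('b \<Rightarrow> 'b \<Rightarrow> 'b) \<Rightarrow> nat" where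
  "breadth scale br = Max (range (breadth_elt scale br))"

definition derived_alg :: "('a::field \<Rightarrow> 'b::ab_group_add \<Rightarrow> 'b) \<Rightarrow> ('b \<Rightarrow> 'b \<Rightarrow> 'b) \<Rightarrow> 'b set" where
  "derived_alg scale br = module.span scale {br x y | x y. True}"

definition lie_center :: "('b \<Rightarrow> 'b \<Rightarrow> 'b::ab_group_add) \<Rightarrow> 'b set" where
  "lie_center br = {z. \<forall>x. br x z = 0}"

fun lower_central :: "('a::field \<Rightarrow> 'b::ab_group_add \<Rightarrow> 'b) \<Rightarrow> ('b \<Rightarrow> 'b \<Rightarrow> 'b) \<Rightarrow> nat \<Rightarrow> 'b set" where
  "lower_central scale br 0 = UNIV"
| "lower_central scale br (Suc k) = module.span scale {br x y | x y. y \<in> lower_central scale br k}"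

definition lie_nilpotent :: "('a::field \<Rightarrow> 'b::ab_group_add \<Rightarrow> 'b) \<Rightarrow> ('b \<Rightarrow> 'b \<Rightarrow> 'b) \<Rightarrow> bool" where
  "lie_nilpotent scale br \<longleftrightarrow> (\<exists>k. lower_central scale br k = {0})"

end

theory Submission
  imports Defs
begin

text \<open>If every \<open>ad\<^sub>x\<close> has rank at most one, a nonzero commutator \<open>[x,y]\<close> spans
  both \<open>ad\<^sub>x(L)\<close> and \<open>ad\<^sub>y(L)\<close>, so by the Jacobi identity
  \<open>[z,[x,y]] = -[x,[y,z]] - [y,[z,x]]\<close> is a multiple of \<open>[x,y]\<close>: every commutator is an
  eigenvector of every \<open>ad\<^sub>z\<close>. In a nilpotent Lie algebra \<open>ad\<^sub>z\<close> is nilpotent, so the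
  eigenvalue vanishes and \<open>[x,y]\<close> is central. Conversely \<open>[L,L] \<subseteq> Z(L)\<close> says \<open>L\<^sup>2 = 0\<close>.\<close>

lemma (in finite_dimensional_vector_space) in_span_singleton_if_dim_le_1:
  assumes "dim V \<le> 1" and "u \<in> V" and "w \<in> V" and "w \<noteq> 0"
  shows "u \<in> span {w}"
proof (rule ccontr)
  assume "u \<notin> span {w}"
  then have "independent {u, w}" and "u \<noteq> w"
    using \<open>w \<noteq> 0\<close> span_base by (auto simp: independent_insert)
  then have "card {u, w} \<le> dim V"
    using \<open>u \<in> V\<close> \<open>w \<in> V\<close> by (intro independent_card_le_dim) auto
  with \<open>dim V \<le> 1\<close> \<open>u \<noteq> w\<close> show False by simp
qed

lemma (in vector_space) finite_dimensional_if_fin_dim_space: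
  assumes "fin_dim_space scale"
  obtains Basis where "finite_dimensional_vector_space scale Basis"
proof -
  obtain W where "finite W" and "span W = UNIV"
    using assms by (auto simp: fin_dim_space_def)
  obtain B where "independent B" and "UNIV \<subseteq> span B"
    using basis_exists[of UNIV] by blast
  moreover have "finite B"
    using independent_span_bound[OF \<open>finite W\<close> \<open>independent B\<close>] \<open>span W = UNIV\<close> by simp
  ultimately have "finite_dimensional_vector_space scale B"
    by unfold_locales auto
  then show thesis by (rule that)
qed

locale lie_alg =
  fixes scale :: "'a::field \<Rightarrow> 'b::ab_group_add \<Rightarrow> 'b"
    and br :: "'b \<Rightarrow> 'b \<Rightarrow> 'b"
  assumes lie_algebra: "lie_algebra scale br"
begin

sublocale vector_space scale
  using lie_algebra by (simp add: lie_algebra_def)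

lemma linear_bracket_right: "Vector_Spaces.linear scale scale (br x)"
  using lie_algebra by (simp add: lie_algebra_def)

lemma bracket_add_left: "br (x + y) z = br x z + br y z"
  using lie_algebra by (simp add: lie_algebra_def linear_iff)

lemma bracket_self [simp]: "br x x = 0"
  using lie_algebra by (simp add: lie_algebra_def)

lemma jacobi: "br x (br y z) + br y (br z x) + br z (br x y) = 0"
  using lie_algebra by (simp add: lie_algebra_def)

lemma bracket_add_right: "br x (y + z) = br x y + br x z"
  and bracket_scale_right: "br x (scale c y) = scale c (br x y)"
  and bracket_zero_right [simp]: "br x 0 = 0"
  and bracket_minus_right: "br x (- y) = - br x y"
proof -
  interpret linear scale scale "br x" by (rule linear_bracket_right)
  show "br x (y + z) = br x y + br x z" by (rule add)
  show "br x (scale c y) = scale c (br x y)" by (rule scale)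
  show "br x 0 = 0" by (rule zero)
  show "br x (- y) = - br x y" by (rule neg)
qed

lemma bracket_antisym: "br x y = - br y x"
proof -
  have "br (x + y) (x + y) = br x x + br y x + (br x y + br y y)"
    by (simp only: bracket_add_left bracket_add_right)
  then have "br y x + br x y = 0" by simp
  then show ?thesis by (simp add: eq_neg_iff_add_eq_0 add.commute)
qed

lemma bracket_in_range_right: "br x y \<in> range (br y)"
  by (metis bracket_antisym bracket_minus_right rangeI)

lemma subspace_lie_center: "subspace (lie_center br)"
  by (simp add: subspace_def lie_center_def bracket_add_right bracket_scale_right)

lemma lie_nilpotent_if_derived_alg_central:
  assumes "derived_alg scale br \<subseteq> lie_center br"
  shows "lie_nilpotent scale br"
proof -
  have "{br x y |x y. y \<in> lower_central scale br 1} \<subseteq> {0}"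
    using assms by (auto simp: derived_alg_def lie_center_def)
  then have "lower_central scale br 2 \<subseteq> {0}"
    by (simp add: numeral_2_eq_2 span_minimal)
  then have "lower_central scale br 2 = {0}"
    using span_zero by (auto simp: numeral_2_eq_2)
  then show ?thesis by (auto simp: lie_nilpotent_def)
qed

lemma ad_power_in_lower_central: "(br z ^^ n) v \<in> lower_central scale br n"
  by (induction n) (auto intro: span_base)

lemma ad_eigenvalue_zero_if_nilpotent:
  assumes "lie_nilpotent scale br" and "br z w = scale m w" and "w \<noteq> 0"
  shows "m = 0"
proof -
  obtain k where "lower_central scale br k = {0}"
    using assms(1) by (auto simp: lie_nilpotent_def)
  moreover have "(br z ^^ k) w = scale (m ^ k) w"
    using assms(2) by (induction k) (simp_all add: bracket_scale_right)
  ultimately have "scale (m ^ k) w = 0"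
    using ad_power_in_lower_central[where z = z and n = k and v = w] by simp
  with \<open>w \<noteq> 0\<close> show "m = 0" by simp
qed

end

locale fin_dim_lie_alg = lie_alg scale br + finite_dimensional_vector_space scale Basis
  for scale :: "'a::field \<Rightarrow> 'b::ab_group_add \<Rightarrow> 'b" and br Basis
begin

lemma breadth_elt_le_breadth: "breadth_elt scale br x \<le> breadth scale br"
proof -
  have "range (breadth_elt scale br) \<subseteq> {..dimension}"
    using dim_subset_UNIV by (auto simp: breadth_elt_def)
  then show ?thesis
    unfolding breadth_def by (intro Max_ge) (auto intro: finite_subset)
qed

lemma commutator_eigenvector_of_ad:
  assumes "\<And>x. dim (range (br x)) \<le> 1" and "br x y \<noteq> 0"
  shows "br z (br x y) \<in> span {br x y}"
proof -
  have "br x (br y z) \<in> span {br x y}"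
    using assms by (intro in_span_singleton_if_dim_le_1[of "range (br x)"]) auto
  moreover have "br y (br z x) \<in> span {br x y}"
    using assms bracket_in_range_right[of x y]
    by (intro in_span_singleton_if_dim_le_1[of "range (br y)"]) auto
  moreover have "br z (br x y) = - br x (br y z) - br y (br z x)"
    using jacobi[of x y z] by (simp add: algebra_simps eq_neg_iff_add_eq_0)
  ultimately show ?thesis
    by (simp add: span_diff span_neg)
qed

lemma derived_alg_central_if_nilpotent:
  assumes "\<And>x. dim (range (br x)) \<le> 1" and "lie_nilpotent scale br"
  shows "derived_alg scale br \<subseteq> lie_center br"
proof -
  have "br z (br x y) = 0" for x y z
  proof (cases "br x y = 0")
    case False
    then obtain m where "br z (br x y) = scale m (br x y)"
      using commutator_eigenvector_of_ad[OF assms(1)] unfolding span_singleton by blast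
    with False show ?thesis
      using ad_eigenvalue_zero_if_nilpotent[OF assms(2)] by auto
  qed simp
  then show ?thesis
    unfolding derived_alg_def
    by (intro span_minimal[OF _ subspace_lie_center]) (auto simp: lie_center_def)
qed

end

theorem proposition2p3:
  fixes scale :: "'a::field \<Rightarrow> 'b::ab_group_add \<Rightarrow> 'b"
    and br :: "'b \<Rightarrow> 'b \<Rightarrow> 'b"
  assumes "(2::'a) \<noteq> 0"
    and "lie_algebra scale br"
    and "fin_dim_space scale"
    and "breadth scale br = 1"
  shows "lie_nilpotent scale br \<longleftrightarrow> derived_alg scale br \<subseteq> lie_center br"
proof -
  \<comment> \<open>Neither \<open>char \<noteq> 2\<close> nor the exact value of the breadth is needed: breadth \<open>\<le> 1\<close> suffices.\<close>
  interpret lie_alg scale br by unfold_locales (rule assms(2))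
  obtain Basis where "finite_dimensional_vector_space scale Basis"
    using finite_dimensional_if_fin_dim_space[OF assms(3)] .
  then interpret fin_dim_lie_alg scale br Basis
    by (intro_locales) (simp add: finite_dimensional_vector_space_def)
  have "dim (range (br x)) \<le> 1" for x
    using breadth_elt_le_breadth[of x] assms(4) by (simp add: breadth_elt_def)
  then show ?thesis
    using derived_alg_central_if_nilpotent lie_nilpotent_if_derived_alg_central by blast
qed

end
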